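(* Let $\lambda,R_c,H,\alpha_L,\alpha_N,B,C>0$ and $0<\delta\le1$. Let $\Phi$ be a homogeneous Poisson point process on $\mathbb{R}^2$ of intensity $\lambda$, $\mathcal{D}=\{y:\|y\|\le R_c\}$, $\Phi_o=\Phi\setminus\mathcal{D}$. For $x\in\mathcal{D}$ let $r_1(x)=\min_{y\in\Phi_o}\|y-x\|$, and let $s(x)\in\{L,N\}$ be a random label, independent of $\Phi$, with $\Pr(s(x)=L)=P_L(\|x\|)$, where $P_L(r_0)=\frac{1}{1+C\exp(-B(\phi(r_0,H)-C))}$, $\phi(r_0,H)=\arctan\frac{H}{r_0}$, and $P_N=1-P_L$. Define the random sets $\mathcal{A}_1=\{x\in\mathcal{D}: r_1(x)^{\alpha_N}\le\delta(H^2+\|x\|^2)^{\alpha_{s(x)}/2}\}$, $\mathcal{A}_2=\{x\in\mathcal{D}:\delta(H^2+\|x\|^2)^{\alpha_{s(x)}/2}<r_1(x)^{\alpha_N}\le\frac1\delta(H^2+\|x\|^2)^{\alpha_{s(x)}/2}\}$, $\mathcal{A}_3=\{x\in\mathcal{D}: r_1(x)^{\alpha_N}>\frac1\delta(H^2+\|x\|^2)^{\alpha_{s(x)}/2}\}$, and the expected areas $C_{\mathcal{A}_i}=\int_{\mathcal{D}}\Pr(x\in\mathcal{A}_i)\,dx$. Then, with $A_s(r_0)=\big(\delta(H^2+r_0^2)^{\alpha_s/2}\big)^{1/\alpha_N}$ and $B_s(r_0)=\big(\tfrac1\delta(H^2+r_0^2)^{\alpha_s/2}\big)^{1/\alpha_N}$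 for $s\in\{L,N\}$, $$C_{\mathcal{A}_1}=2\pi\sum_{s\in\{L,N\}}\int_0^{R_c}P_s(r_0)F_{r_1|r_0}(A_s(r_0))r_0\,dr_0,$$ $$C_{\mathcal{A}_2}=2\pi\sum_{s\in\{L,N\}}\int_0^{R_c}P_s(r_0)\big(F_{r_1|r_0}(B_s(r_0))-F_{r_1|r_0}(A_s(r_0))\big)r_0\,dr_0,$$ $$C_{\mathcal{A}_3}=2\pi\sum_{s\in\{L,N\}}\int_0^{R_c}P_s(r_0)\big(1-F_{r_1|r_0}(B_s(r_0))\big)r_0\,dr_0,$$ where $F_{r_1|r_0}$ is the cumulative distribution function of $r_1(x)$ for any $x$ with $\|x\|=r_0$.
   Context: A UAV hovers at height $H$ above the center of the disc $\mathcal{D}$; $s(x)$ indicates whether the UAV-to-user link is line-of-sight ($L$) or not ($N$), with path-loss exponents $\alpha_L,\alpha_N$. A user at $x$ is served by its nearest ground base station only ($\mathcal{A}_1$), by both the UAV and the nearest ground base station ($\mathcal{A}_2$), or by the UAV only ($\mathcal{A}_3$). $F_{r_1|r_0}(r)$ equals $0$ for $r\le R_c-r_0$, $1-e^{-\lambda\zeta_2(r)}$ for $R_c-r_0<r<R_c+r_0$ (with $\zeta_2(r)$ the area of the disc of radius $r$ around $x$ lying outside $\mathcal{D}$), and $1-e^{-\lambda(\pi r^2-\pi R_c^2)}$ otherwise. *)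

theory Defs
  imports "HOL-Probability.Probability"
begin

definition is_PPP :: "'a measure \<Rightarrow> real \<Rightarrow> ('a \<Rightarrow> (real \<times> real) set) \<Rightarrow> bool" where
  "is_PPP M lam Phi \<longleftrightarrow>
     (\<forall>\<omega>\<in>space M. \<forall>A. bounded A \<longrightarrow> finite (Phi \<omega> \<inter> A)) \<and>
     (\<forall>A (k::nat). A \<in> sets lborel \<and> bounded A \<longrightarrow>
        {\<omega>\<in>space M. card (Phi \<omega> \<inter> A) = k} \<in> sets M \<and>
        measure M {\<omega>\<in>space M. card (Phi \<omega> \<inter> A) = k}
          = (lam * measure lborel A) ^ k / fact k * exp (- (lam * measure lborel A))) \<and>
     (\<forall>(I::nat set) A. disjoint_family_on A I \<and> (\<forall>i\<in>I. A i \<in> sets lborel \<and> bounded (A i)) \<longrightarrow>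
        prob_space.indep_vars M (\<lambda>_. count_space UNIV) (\<lambda>i \<omega>. card (Phi \<omega> \<inter> A i)) I)"

definition PPP_sigma :: "'a measure \<Rightarrow> ('a \<Rightarrow> (real \<times> real) set) \<Rightarrow> 'a set set" where
  "PPP_sigma M Phi = sigma_sets (space M)
     {{\<omega>\<in>space M. card (Phi \<omega> \<inter> A) = k} | A k. A \<in> sets lborel \<and> bounded A}"

definition r1 :: "real \<Rightarrow> (real \<times> real) set \<Rightarrow> real \<times> real \<Rightarrow> real" where
  "r1 Rc P x = infdist x {y\<in>P. norm y > Rc}"

text \<open>CDF of r1(x) for x with norm x = r0 (evaluated at x = (r0,0)).\<close>
definition F_r1 :: "'a measure \<Rightarrow> ('a \<Rightarrow> (real \<times> real) set) \<Rightarrow> real \<Rightarrow> real \<Rightarrow> real \<Rightarrow> real" where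
  "F_r1 M Phi Rc r0 r = measure M {\<omega>\<in>space M. r1 Rc (Phi \<omega>) (r0, 0) \<le> r}"

definition elev :: "real \<Rightarrow> real \<Rightarrow> real" where
  "elev r0 H = (if r0 = 0 then pi / 2 else arctan (H / r0))"

definition P_L :: "real \<Rightarrow> real \<Rightarrow> real \<Rightarrow> real \<Rightarrow> real" where
  "P_L B C H r0 = 1 / (1 + C * exp (- B * (elev r0 H - C)))"

definition P_N :: "real \<Rightarrow> real \<Rightarrow> real \<Rightarrow> real \<Rightarrow> real" where
  "P_N B C H r0 = 1 - P_L B C H r0"

text \<open>Path-loss exponent for label s (True = LoS, False = NLoS).\<close>
definition alpha_of :: "real \<Rightarrow> real \<Rightarrow> bool \<Rightarrow> real" where
  "alpha_of aL aN s = (if s then aL else aN)"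

definition A_thr :: "real \<Rightarrow> real \<Rightarrow> real \<Rightarrow> real \<Rightarrow> real \<Rightarrow> real" where
  "A_thr \<delta> H a aN r0 = (\<delta> * (H\<^sup>2 + r0\<^sup>2) powr (a / 2)) powr (1 / aN)"

definition B_thr :: "real \<Rightarrow> real \<Rightarrow> real \<Rightarrow> real \<Rightarrow> real \<Rightarrow> real" where
  "B_thr \<delta> H a aN r0 = ((1 / \<delta>) * (H\<^sup>2 + r0\<^sup>2) powr (a / 2)) powr (1 / aN)"

end

theory Submission
  imports Defs "HOL-Real_Asymp.Real_Asymp"
begin

text \<open>Since the label \<open>s(x)\<close> is independent of the point process, conditioning on it gives
  \<open>Pr(r\<^sub>1(x) \<le> t\<^bsub>s(x)\<^esub>) = P\<^sub>L F(t\<^sub>L) + P\<^sub>N F(t\<^sub>N)\<close>, and each of the three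
  regions is a Boolean combination of such events because \<open>r\<^sup>\<alpha> \<le> T \<longleftrightarrow> r \<le> T powr (1/\<alpha>)\<close>.
  The event \<open>r\<^sub>1(x) \<le> a\<close> fails exactly when the process has no point in the part of the
  ball of radius \<open>a\<close> about \<open>x\<close> lying outside the disc (almost surely there are points outside
  the disc), so it has probability \<open>1 - exp(-\<lambda> area)\<close>; this area depends only on \<open>norm x\<close>
  because rotations, being products of three shears, preserve Lebesgue measure. The resulting
  radial integrand is then integrated over the disc in polar coordinates.\<close>

lemma emeasure_lborel_translation_vimage:
  fixes A :: "real set" assumes "A \<in> sets borel"
  shows "emeasure lborel ((\<lambda>x. x + c) -` A) = emeasure lborel A"
proof -
  have "emeasure lborel ((+) c -` A) = emeasure (distr lborel borel ((+) c)) A"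
    using assms by (subst emeasure_distr) auto
  also have "\<dots> = emeasure lborel A" by (simp add: lborel_distr_plus)
  finally show ?thesis by (simp add: add.commute[of _ c])
qed

lemma emeasure_lborel_shear_fst_vimage:
  fixes A :: "(real \<times> real) set" assumes A: "A \<in> sets borel"
  shows "emeasure lborel ((\<lambda>(x, y). (x + a * y, y)) -` A) = emeasure lborel A"
proof -
  let ?S = "(\<lambda>(x, y). (x + a * y, y)) :: real \<times> real \<Rightarrow> real \<times> real"
  have "?S \<in> borel_measurable borel"
    unfolding borel_prod[symmetric] by measurable
  then have "?S -` A \<in> sets borel" using A by (rule measurable_sets_borel)
  then have "?S -` A \<in> sets (lborel \<Otimes>\<^sub>M lborel)" unfolding lborel_prod by simp
  then have "emeasure lborel (?S -` A) = (\<integral>\<^sup>+y. emeasure lborel ((\<lambda>x. (x, y)) -` (?S -` A)) \<partial>lborel)"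
    by (simp add: lborel_pair.emeasure_pair_measure_alt2 flip: lborel_prod)
  also have "\<dots> = (\<integral>\<^sup>+y. emeasure lborel ((\<lambda>x. (x, y)) -` A) \<partial>lborel)"
  proof (rule nn_integral_cong)
    fix y :: real
    have "(\<lambda>x. (x, y)) -` A \<in> sets borel"
      by (rule measurable_sets_borel[OF _ A]) (unfold borel_prod[symmetric], measurable)
    moreover have "(\<lambda>x. (x, y)) -` (?S -` A) = (\<lambda>x. x + a * y) -` ((\<lambda>x. (x, y)) -` A)" by auto
    ultimately show "emeasure lborel ((\<lambda>x. (x, y)) -` (?S -` A)) = emeasure lborel ((\<lambda>x. (x, y)) -` A)"
      by (simp add: emeasure_lborel_translation_vimage)
  qed
  also have "\<dots> = emeasure (lborel \<Otimes>\<^sub>M lborel) A"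
    using A by (intro lborel_pair.emeasure_pair_measure_alt2[symmetric]) (unfold lborel_prod, simp)
  finally show ?thesis by (simp add: lborel_prod)
qed

lemma emeasure_lborel_shear_snd_vimage:
  fixes A :: "(real \<times> real) set" assumes A: "A \<in> sets borel"
  shows "emeasure lborel ((\<lambda>(x, y). (x, y + b * x)) -` A) = emeasure lborel A"
proof -
  let ?S = "(\<lambda>(x, y). (x, y + b * x)) :: real \<times> real \<Rightarrow> real \<times> real"
  have "?S \<in> borel_measurable borel"
    unfolding borel_prod[symmetric] by measurable
  then have "?S -` A \<in> sets borel" using A by (rule measurable_sets_borel)
  then have "?S -` A \<in> sets (lborel \<Otimes>\<^sub>M lborel)" unfolding lborel_prod by simp
  then have "emeasure lborel (?S -` A) = (\<integral>\<^sup>+x. emeasure lborel (Pair x -` (?S -` A)) \<partial>lborel)"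
    by (simp add: lborel.emeasure_pair_measure_alt flip: lborel_prod)
  also have "\<dots> = (\<integral>\<^sup>+x. emeasure lborel (Pair x -` A) \<partial>lborel)"
  proof (rule nn_integral_cong)
    fix x :: real
    have "Pair x -` A \<in> sets borel"
      by (rule measurable_sets_borel[OF _ A]) (unfold borel_prod[symmetric], measurable)
    moreover have "Pair x -` (?S -` A) = (\<lambda>y. y + b * x) -` (Pair x -` A)" by auto
    ultimately show "emeasure lborel (Pair x -` (?S -` A)) = emeasure lborel (Pair x -` A)"
      by (simp add: emeasure_lborel_translation_vimage)
  qed
  also have "\<dots> = emeasure (lborel \<Otimes>\<^sub>M lborel) A"
    using A by (intro lborel.emeasure_pair_measure_alt[symmetric]) (unfold lborel_prod, simp)
  finally show ?thesis by (simp add: lborel_prod)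
qed

definition rotation :: "real \<Rightarrow> real \<Rightarrow> real \<times> real \<Rightarrow> real \<times> real" where
  "rotation c s = (\<lambda>(x, y). (c * x - s * y, s * x + c * y))"

lemma rotation_measurable [measurable]: "rotation c s \<in> borel_measurable borel"
  unfolding rotation_def borel_prod[symmetric] by measurable

lemma norm_rotation:
  assumes "c\<^sup>2 + s\<^sup>2 = 1" shows "norm (rotation c s p) = norm p"
proof -
  obtain a b where p: "p = (a, b)" by (cases p)
  have "(c * a - s * b)\<^sup>2 + (s * a + c * b)\<^sup>2 = (c\<^sup>2 + s\<^sup>2) * (a\<^sup>2 + b\<^sup>2)"
    by (simp add: algebra_simps power2_eq_square)
  then show ?thesis using assms by (simp add: rotation_def norm_Pair p)
qed

lemma dist_rotation:
  assumes "c\<^sup>2 + s\<^sup>2 = 1" shows "dist (rotation c s p) (rotation c s q) = dist p q"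
proof -
  have "rotation c s p - rotation c s q = rotation c s (p - q)"
    by (cases p; cases q) (simp add: rotation_def algebra_simps)
  then show ?thesis using norm_rotation[OF assms] by (simp add: dist_norm)
qed

text \<open>A rotation by an angle other than \<open>\<pi>\<close> is the product of three shears
  (with \<open>a = -tan(\<theta>/2)\<close>); the rotation by \<open>\<pi>\<close> is the square of the rotation by \<open>\<pi>/2\<close>.\<close>

lemma emeasure_lborel_rotation_vimage_shears:
  fixes A :: "(real \<times> real) set" assumes A: "A \<in> sets borel"
    and cs: "c\<^sup>2 + s\<^sup>2 = 1" and c: "c \<noteq> -1"
  shows "emeasure lborel (rotation c s -` A) = emeasure lborel A"
proof -
  define a where "a = - s / (1 + c)"
  let ?X = "(\<lambda>(x, y). (x + a * y, y)) :: real \<times> real \<Rightarrow> real \<times> real"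
  let ?Y = "(\<lambda>(x, y). (x, y + s * x)) :: real \<times> real \<Rightarrow> real \<times> real"
  have c1: "1 + c \<noteq> 0" using c by linarith
  have "s\<^sup>2 = (1 - c) * (1 + c)" using cs by (simp add: algebra_simps power2_eq_square)
  then have as: "1 + a * s = c"
    using c1 unfolding a_def by (simp add: field_simps power2_eq_square)
  have "2 * a + a * a * s = a * (1 + (1 + a * s))" by (simp add: algebra_simps)
  also have "\<dots> = a * (1 + c)" by (simp add: as)
  also have "\<dots> = - s" using c1 unfolding a_def by simp
  finally have aas: "2 * a + a * a * s = - s" .
  have "rotation c s = ?X \<circ> ?Y \<circ> ?X"
  proof
    fix p :: "real \<times> real"
    obtain x y where p: "p = (x, y)" by (cases p)
    have "x + a * y + a * (y + s * (x + a * y)) = (1 + a * s) * x + (2 * a + a * a * s) * y"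
      by (simp add: algebra_simps)
    moreover have "y + s * (x + a * y) = s * x + (1 + a * s) * y"
      by (simp add: algebra_simps)
    ultimately show "rotation c s p = (?X \<circ> ?Y \<circ> ?X) p"
      by (simp add: rotation_def p as aas)
  qed
  then have "rotation c s -` A = ?X -` (?Y -` (?X -` A))" by (simp add: vimage_comp)
  moreover have XA: "?X -` A \<in> sets borel"
    by (rule measurable_sets_borel[OF _ A]) (unfold borel_prod[symmetric], measurable)
  moreover have "?Y -` (?X -` A) \<in> sets borel"
    by (rule measurable_sets_borel[OF _ XA]) (unfold borel_prod[symmetric], measurable)
  ultimately show ?thesis
    using A by (simp add: emeasure_lborel_shear_fst_vimage emeasure_lborel_shear_snd_vimage)
qed

lemma emeasure_lborel_rotation_vimage:
  fixes A :: "(real \<times> real) set" assumes A: "A \<in> sets borel" and cs: "c\<^sup>2 + s\<^sup>2 = 1"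
  shows "emeasure lborel (rotation c s -` A) = emeasure lborel A"
proof (cases "c = -1")
  case False
  then show ?thesis using emeasure_lborel_rotation_vimage_shears[OF A cs] by simp
next
  case True
  then have "s = 0" using cs by (simp add: power2_eq_square)
  then have "rotation c s = rotation 0 1 \<circ> rotation 0 1" using True by (auto simp: rotation_def)
  then have "rotation c s -` A = rotation 0 1 -` (rotation 0 1 -` A)" by (simp add: vimage_comp)
  moreover have "rotation 0 1 -` A \<in> sets borel" by (rule measurable_sets_borel[OF _ A]) simp
  ultimately show ?thesis
    using emeasure_lborel_rotation_vimage_shears[of _ 0 1] A by simp
qed

lemma distr_norm_lborel_plane:
  "distr (lborel :: (real \<times> real) measure) borel norm = density lborel (\<lambda>r. ennreal (2 * pi * r))"
  (is "?D = ?P")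
proof (rule measure_eqI_generator_eq[where E="range lessThan" and \<Omega>=UNIV and A="\<lambda>i. {..< real i}"])
  have "{..<a} \<inter> {..<b} = {..<min a b}" for a b :: real by auto
  then show "Int_stable (range lessThan :: real set set)" by (auto simp: Int_stable_def)
  show "range lessThan \<subseteq> Pow (UNIV :: real set)" by auto
  show "sets ?D = sigma_sets UNIV (range lessThan)" "sets ?P = sigma_sets UNIV (range lessThan)"
    by (simp_all add: borel_Iio)
  show "range (\<lambda>i. {..< real i}) \<subseteq> range lessThan" by auto
  show "(\<Union>i. {..< real i}) = UNIV" by (auto intro: reals_Archimedean2)
  have area: "emeasure ?D {..<a} = ennreal (pi * (max 0 a)\<^sup>2) \<and> emeasure ?P {..<a} = ennreal (pi * (max 0 a)\<^sup>2)"
    for a :: real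
  proof
    have "norm -` {..<a} = ball (0::real \<times> real) (max 0 a)"
      using norm_ge_zero by (auto simp: dist_0_norm max_def) (metis le_less_trans less_le_not_le norm_ge_zero)
    then show "emeasure ?D {..<a} = ennreal (pi * (max 0 a)\<^sup>2)"
      by (simp add: emeasure_distr emeasure_ball unit_ball_vol_2 power2_eq_square)
    have "emeasure ?P {..<a} = (\<integral>\<^sup>+r. ennreal (2 * pi * r) * indicator {..<a} r \<partial>lborel)"
      by (simp add: emeasure_density)
    also have "\<dots> = (\<integral>\<^sup>+r. ennreal (2 * pi * r) * indicator {0..max 0 a} r \<partial>lborel)"
    proof (rule nn_integral_cong_AE)
      show "AE r in lborel. ennreal (2 * pi * r) * indicator {..<a} r = ennreal (2 * pi * r) * indicator {0..max 0 a} r"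
        using AE_lborel_singleton[of a] AE_lborel_singleton[of 0]
        by eventually_elim (auto simp: indicator_def ennreal_eq_0_iff mult_le_0_iff)
    qed
    also have "\<dots> = ennreal (pi * (max 0 a)\<^sup>2 - pi * 0\<^sup>2)"
      by (rule nn_integral_FTC_Icc[where F="\<lambda>r. pi * r\<^sup>2"])
         (auto intro!: derivative_eq_intros simp: field_simps)
    finally show "emeasure ?P {..<a} = ennreal (pi * (max 0 a)\<^sup>2)" by simp
  qed
  show "emeasure ?D X = emeasure ?P X" if "X \<in> range lessThan" for X
    using that area by auto
  show "emeasure ?D {..< real i} \<noteq> \<infinity>" for i
    using area by simp
qed

lemma integral_disc_radial:
  fixes g :: "real \<Rightarrow> real"
  assumes [measurable]: "g \<in> borel_measurable borel"
  shows "(LINT x:{x::real \<times> real. norm x \<le> R}|lborel. g (norm x)) = 2 * pi * (LINT r:{0..R}|lborel. g r * r)"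
proof -
  define h where "h r = indicator {..R} r * g r" for r :: real
  have [measurable]: "h \<in> borel_measurable borel" unfolding h_def by measurable
  have "(LINT x:{x::real \<times> real. norm x \<le> R}|lborel. g (norm x)) = integral\<^sup>L lborel (\<lambda>x::real \<times> real. h (norm x))"
    unfolding set_lebesgue_integral_def h_def by (simp add: indicator_def)
  also have "\<dots> = integral\<^sup>L (distr (lborel :: (real \<times> real) measure) borel norm) h"
    by (rule integral_distr[symmetric]) auto
  also have "\<dots> = integral\<^sup>L lborel (\<lambda>r. (2 * pi * max 0 r) *\<^sub>R h r)"
  proof -
    have "(\<lambda>r. ennreal (2 * pi * r)) = (\<lambda>r. ennreal (2 * pi * max 0 r))"
      by (auto simp: max_def ennreal_neg mult_le_0_iff)
    then show ?thesis unfolding distr_norm_lborel_plane by (simp add: integral_density)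
  qed
  also have "\<dots> = integral\<^sup>L lborel (\<lambda>r. 2 * pi * (indicator {0..R} r *\<^sub>R (g r * r)))"
    by (rule Bochner_Integration.integral_cong) (auto simp: h_def indicator_def max_def)
  also have "\<dots> = 2 * pi * (LINT r:{0..R}|lborel. g r * r)"
    unfolding set_lebesgue_integral_def by simp
  finally show ?thesis .
qed

lemma integral_disc_radial_mixture:
  fixes f :: "real \<times> real \<Rightarrow> real" and p q u v :: "real \<Rightarrow> real"
  assumes f: "\<And>x. norm x \<le> R \<Longrightarrow> f x = p (norm x) * u (norm x) + q (norm x) * v (norm x)"
    and [measurable]: "p \<in> borel_measurable borel" "q \<in> borel_measurable borel"
      "u \<in> borel_measurable borel" "v \<in> borel_measurable borel"
    and bounded: "\<And>r. r \<in> {0..R} \<Longrightarrow> \<bar>p r * u r\<bar> \<le> K" "\<And>r. r \<in> {0..R} \<Longrightarrow> \<bar>q r * v r\<bar> \<le> K"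
  shows "(LINT x:{x. norm x \<le> R}|lborel. f x)
    = 2 * pi * ((LINT r:{0..R}|lborel. p r * u r * r) + (LINT r:{0..R}|lborel. q r * v r * r))"
proof -
  have integrable: "set_integrable lborel {0..R} (\<lambda>r. g r * r)"
    if [measurable]: "g \<in> borel_measurable borel" and "\<And>r. r \<in> {0..R} \<Longrightarrow> \<bar>g r\<bar> \<le> K" for g
  proof (rule set_integrable_bound[where f="\<lambda>_. K * R"])
    show "set_integrable lborel {0..R} (\<lambda>_. K * R)" by (rule borel_integrable_atLeastAtMost') auto
    show "set_borel_measurable lborel {0..R} (\<lambda>r. g r * r)"
      unfolding set_borel_measurable_def by measurable
    have "\<bar>g r * r\<bar> \<le> K * R" if "r \<in> {0..R}" for r
      using that \<open>\<And>r. r \<in> {0..R} \<Longrightarrow> \<bar>g r\<bar> \<le> K\<close>[OF that]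
      by (auto simp: abs_mult intro: mult_mono order_trans[OF abs_ge_zero])
    then show "AE r in lborel. r \<in> {0..R} \<longrightarrow> norm (g r * r) \<le> norm (K * R)"
      by (auto intro!: always_eventually order_trans[OF _ abs_ge_self])
  qed
  have "(LINT x:{x. norm x \<le> R}|lborel. f x)
      = (LINT x:{x::real \<times> real. norm x \<le> R}|lborel. p (norm x) * u (norm x) + q (norm x) * v (norm x))"
    by (rule set_lebesgue_integral_cong) (auto simp: f)
  also have "\<dots> = 2 * pi * (LINT r:{0..R}|lborel. (p r * u r + q r * v r) * r)"
    by (rule integral_disc_radial) measurable
  also have "(LINT r:{0..R}|lborel. (p r * u r + q r * v r) * r)
      = (LINT r:{0..R}|lborel. p r * u r * r + q r * v r * r)"
    by (simp add: distrib_right)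
  also have "\<dots> = (LINT r:{0..R}|lborel. p r * u r * r) + (LINT r:{0..R}|lborel. q r * v r * r)"
    using integrable[of "\<lambda>r. p r * u r"] integrable[of "\<lambda>r. q r * v r"] bounded
    by (intro set_integral_add(2)) simp_all
  finally show ?thesis .
qed

definition cball_outside :: "real \<Rightarrow> real \<times> real \<Rightarrow> real \<Rightarrow> (real \<times> real) set" where
  "cball_outside R x a = cball x a - cball 0 R"

lemma mem_cball_outside: "y \<in> cball_outside R x a \<longleftrightarrow> dist x y \<le> a \<and> R < norm y"
  by (auto simp: cball_outside_def)

lemma bounded_cball_outside: "bounded (cball_outside R x a)"
  unfolding cball_outside_def by (rule bounded_subset[OF bounded_cball]) auto

lemma cball_outside_sets: "cball_outside R x a \<in> sets lborel"
  unfolding cball_outside_def by simp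

lemma closed_subset_locally_finite:
  fixes P :: "'a::metric_space set"
  assumes "\<And>A. bounded A \<Longrightarrow> finite (P \<inter> A)" and "Q \<subseteq> P"
  shows "closed Q"
proof -
  have "\<not> z islimpt Q" for z
  proof -
    have "finite (P \<inter> ball z 1)" using assms(1) by simp
    then have "finite (Q \<inter> ball z 1)" by (rule rev_finite_subset) (use assms(2) in auto)
    then show ?thesis unfolding islimpt_eq_infinite_ball by (meson zero_less_one)
  qed
  then show ?thesis by (simp add: closed_limpt)
qed

text \<open>Since a locally finite set of points is closed, the infimum defining \<^const>\<open>r1\<close> is
  attained; if there is no point outside the disc, \<^const>\<open>r1\<close> is the junk value \<open>infdist x {} = 0\<close>.\<close>

lemma r1_le_iff:
  assumes "\<And>A. bounded A \<Longrightarrow> finite (P \<inter> A)"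
  shows "r1 R P x \<le> a \<longleftrightarrow> 0 \<le> a \<and> (P \<inter> cball_outside R x a \<noteq> {} \<or> (\<forall>y\<in>P. norm y \<le> R))"
proof (cases "\<forall>y\<in>P. norm y \<le> R")
  case True
  then have "{y\<in>P. R < norm y} = {}" by force
  then show ?thesis using True by (simp add: r1_def infdist_def)
next
  case False
  let ?S = "{y\<in>P. R < norm y}"
  have "closed ?S" by (rule closed_subset_locally_finite[OF assms]) auto
  moreover have "?S \<noteq> {}" using False by force
  ultimately obtain y where y: "y \<in> ?S" "infdist x ?S = dist x y"
    using infdist_attains_inf by blast
  have "r1 R P x \<le> a \<longleftrightarrow> (\<exists>z\<in>?S. dist x z \<le> a)"
  proof
    assume "r1 R P x \<le> a"
    then show "\<exists>z\<in>?S. dist x z \<le> a" using y unfolding r1_def by (intro bexI[of _ y]) auto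
  next
    assume "\<exists>z\<in>?S. dist x z \<le> a"
    then obtain z where "z \<in> ?S" "dist x z \<le> a" by blast
    then show "r1 R P x \<le> a" unfolding r1_def using infdist_le[of z ?S x] by linarith
  qed
  also have "\<dots> \<longleftrightarrow> P \<inter> cball_outside R x a \<noteq> {}" by (auto simp: mem_cball_outside)
  also have "\<dots> \<longleftrightarrow> 0 \<le> a \<and> P \<inter> cball_outside R x a \<noteq> {}"
    by (auto simp: mem_cball_outside intro: order_trans[OF zero_le_dist])
  finally show ?thesis using False by blast
qed

lemma measure_cball_outside_rotate:
  "measure lborel (cball_outside R x a) = measure lborel (cball_outside R (norm x, 0) a)"
proof (cases "x = 0")
  case True then show ?thesis by (simp add: zero_prod_def)
next
  case False
  define c where "c = fst x / norm x"
  define s where "s = snd x / norm x"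
  have "c\<^sup>2 + s\<^sup>2 = ((fst x)\<^sup>2 + (snd x)\<^sup>2) / (norm x)\<^sup>2"
    unfolding c_def s_def by (simp add: power_divide add_divide_distrib)
  also have "(fst x)\<^sup>2 + (snd x)\<^sup>2 = (norm x)\<^sup>2" by (cases x) (simp add: norm_Pair)
  finally have cs: "c\<^sup>2 + s\<^sup>2 = 1" using False by simp
  have "rotation c s (norm x, 0) = x"
    using False unfolding rotation_def c_def s_def by (cases x) simp
  then have "dist x (rotation c s y) = dist (norm x, 0) y" for y
    using dist_rotation[OF cs, of "(norm x, 0)" y] by simp
  then have "cball_outside R (norm x, 0) a = rotation c s -` cball_outside R x a"
    using norm_rotation[OF cs] unfolding set_eq_iff vimage_eq mem_cball_outside by metis
  then show ?thesis
    using emeasure_lborel_rotation_vimage[OF _ cs] cball_outside_sets by (simp add: measure_def)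
qed

lemma borel_measurable_measure_cball_outside:
  assumes [measurable]: "t \<in> borel_measurable borel"
  shows "(\<lambda>r. measure lborel (cball_outside R (r, 0) (t r))) \<in> borel_measurable borel"
proof -
  define Q where "Q = {p \<in> space (borel \<Otimes>\<^sub>M (borel :: (real \<times> real) measure)).
      dist (fst p, 0::real) (snd p) \<le> t (fst p) \<and> R < norm (snd p)}"
  have "Q \<in> sets (borel \<Otimes>\<^sub>M (borel :: (real \<times> real) measure))" unfolding Q_def by measurable
  then have "Q \<in> sets (borel \<Otimes>\<^sub>M (lborel :: (real \<times> real) measure))"
    by (simp cong: sets_pair_measure_cong)
  then have "(\<lambda>r. emeasure lborel (Pair r -` Q)) \<in> borel_measurable borel"
    by (rule lborel.measurable_emeasure_Pair)
  moreover have "Pair r -` Q = cball_outside R (r, 0) (t r)" for r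
    unfolding Q_def by (auto simp: mem_cball_outside space_pair_measure)
  ultimately have "(\<lambda>r. emeasure lborel (cball_outside R (r, 0) (t r))) \<in> borel_measurable borel"
    by simp
  then show ?thesis unfolding measure_def by measurable
qed

locale poisson_point_process = prob_space M for M :: "'a measure" +
  fixes lam :: real and Phi :: "'a \<Rightarrow> (real \<times> real) set"
  assumes lam_pos: "0 < lam" and PPP: "is_PPP M lam Phi"
begin

lemma locally_finite: "\<omega> \<in> space M \<Longrightarrow> bounded A \<Longrightarrow> finite (Phi \<omega> \<inter> A)"
  using PPP unfolding is_PPP_def by blast

lemma count_event_in_PPP_sigma:
  "A \<in> sets lborel \<Longrightarrow> bounded A \<Longrightarrow> {\<omega>\<in>space M. card (Phi \<omega> \<inter> A) = k} \<in> PPP_sigma M Phi"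
  unfolding PPP_sigma_def by (rule sigma_sets.Basic) blast

lemma PPP_sigma_subset_events: "PPP_sigma M Phi \<subseteq> events"
  unfolding PPP_sigma_def using PPP unfolding is_PPP_def
  by (intro sets.sigma_sets_subset) blast

lemma void_event_eq:
  "bounded A \<Longrightarrow> {\<omega>\<in>space M. Phi \<omega> \<inter> A = {}} = {\<omega>\<in>space M. card (Phi \<omega> \<inter> A) = 0}"
  using locally_finite by auto

lemma void_event_in_PPP_sigma:
  "A \<in> sets lborel \<Longrightarrow> bounded A \<Longrightarrow> {\<omega>\<in>space M. Phi \<omega> \<inter> A = {}} \<in> PPP_sigma M Phi"
  by (simp add: void_event_eq count_event_in_PPP_sigma)

lemma prob_void_event:
  assumes "A \<in> sets lborel" "bounded A"
  shows "prob {\<omega>\<in>space M. Phi \<omega> \<inter> A = {}} = exp (- (lam * measure lborel A))"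
proof -
  have "prob {\<omega>\<in>space M. card (Phi \<omega> \<inter> A) = 0}
      = (lam * measure lborel A) ^ 0 / fact 0 * exp (- (lam * measure lborel A))"
    using PPP assms unfolding is_PPP_def by blast
  then show ?thesis by (simp add: void_event_eq[OF assms(2)])
qed

lemma no_points_outside_in_PPP_sigma_null_sets:
  assumes "0 \<le> R"
  shows "{\<omega>\<in>space M. \<forall>y\<in>Phi \<omega>. norm y \<le> R} \<in> PPP_sigma M Phi \<inter> null_sets M"
proof -
  define V where "V n = {\<omega>\<in>space M. Phi \<omega> \<inter> (cball 0 (real n) - cball 0 R) = {}}" for n
  have V: "V n \<in> PPP_sigma M Phi" for n
    unfolding V_def by (rule void_event_in_PPP_sigma) (auto intro: bounded_subset[OF bounded_cball])
  have "(\<forall>y\<in>Phi \<omega>. norm y \<le> R) \<longleftrightarrow> (\<forall>n. Phi \<omega> \<inter> (cball 0 (real n) - cball 0 R) = {})" for \<omega>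
  proof
    show "\<forall>y\<in>Phi \<omega>. norm y \<le> R" if empty: "\<forall>n. Phi \<omega> \<inter> (cball 0 (real n) - cball 0 R) = {}"
    proof
      fix y assume "y \<in> Phi \<omega>"
      moreover obtain n where "norm y \<le> real n" using real_arch_simple by blast
      ultimately show "norm y \<le> R" using empty[rule_format, of n] by (auto simp: mem_cball_0)
    qed
  qed auto
  then have eq: "{\<omega>\<in>space M. \<forall>y\<in>Phi \<omega>. norm y \<le> R} = (\<Inter>n. V n)"
    unfolding V_def by auto
  have sigma: "(\<Inter>n. V n) \<in> PPP_sigma M Phi"
    using V unfolding PPP_sigma_def by (intro sigma_sets_Inter) auto
  have bound: "prob (\<Inter>n. V n) \<le> exp (- (lam * (pi * (real n)\<^sup>2 - pi * R\<^sup>2)))" if "R \<le> real n" for n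
  proof -
    have "measure lborel (cball (0::real \<times> real) (real n) - cball 0 R)
        = measure lborel (cball (0::real \<times> real) (real n)) - measure lborel (cball (0::real \<times> real) R)"
      using that by (intro measure_Diff) (auto simp: emeasure_cball)
    also have "\<dots> = pi * (real n)\<^sup>2 - pi * R\<^sup>2"
      using that assms by (simp add: content_cball unit_ball_vol_2 power2_eq_square)
    finally have "prob (V n) = exp (- (lam * (pi * (real n)\<^sup>2 - pi * R\<^sup>2)))"
      unfolding V_def by (subst prob_void_event) (auto intro: bounded_subset[OF bounded_cball])
    moreover have "prob (\<Inter>n. V n) \<le> prob (V n)"
      using V PPP_sigma_subset_events by (intro finite_measure_mono) auto
    ultimately show ?thesis by simp
  qed
  have "(\<lambda>n. exp (- (lam * (pi * (real n)\<^sup>2 - pi * R\<^sup>2)))) \<longlonglongrightarrow> 0"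
    using lam_pos by real_asymp
  moreover obtain N where "R \<le> real N" using real_arch_simple by blast
  ultimately have "prob (\<Inter>n. V n) \<le> 0"
    by (intro LIMSEQ_le_const[of "\<lambda>n. exp (- (lam * (pi * (real n)\<^sup>2 - pi * R\<^sup>2)))"] exI[of _ N])
       (auto intro!: bound)
  then have "prob (\<Inter>n. V n) = 0" using measure_nonneg[of M "\<Inter>n. V n"] by linarith
  then show ?thesis
    using sigma PPP_sigma_subset_events by (auto simp: eq emeasure_eq_measure intro!: null_setsI)
qed

lemma r1_le_event_eq:
  assumes "0 \<le> a"
  shows "{\<omega>\<in>space M. r1 R (Phi \<omega>) x \<le> a}
    = (space M - {\<omega>\<in>space M. Phi \<omega> \<inter> cball_outside R x a = {}})
      \<union> {\<omega>\<in>space M. \<forall>y\<in>Phi \<omega>. norm y \<le> R}"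
proof -
  have "r1 R (Phi \<omega>) x \<le> a \<longleftrightarrow> Phi \<omega> \<inter> cball_outside R x a \<noteq> {} \<or> (\<forall>y\<in>Phi \<omega>. norm y \<le> R)"
    if "\<omega> \<in> space M" for \<omega>
    using r1_le_iff[of "Phi \<omega>"] locally_finite[OF that] assms by blast
  then show ?thesis by blast
qed

lemma r1_le_event_in_PPP_sigma:
  assumes "0 \<le> R" "0 \<le> a"
  shows "{\<omega>\<in>space M. r1 R (Phi \<omega>) x \<le> a} \<in> PPP_sigma M Phi"
  unfolding r1_le_event_eq[OF assms(2)] PPP_sigma_def
  using void_event_in_PPP_sigma[OF cball_outside_sets bounded_cball_outside]
    no_points_outside_in_PPP_sigma_null_sets[OF assms(1)]
  unfolding PPP_sigma_def by (intro sigma_sets_Un sigma_sets.Compl) auto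

lemma r1_le_event_sets:
  "0 \<le> R \<Longrightarrow> 0 \<le> a \<Longrightarrow> {\<omega>\<in>space M. r1 R (Phi \<omega>) x \<le> a} \<in> events"
  using r1_le_event_in_PPP_sigma PPP_sigma_subset_events by blast

lemma prob_r1_le:
  assumes "0 \<le> R" "0 \<le> a"
  shows "prob {\<omega>\<in>space M. r1 R (Phi \<omega>) x \<le> a} = 1 - exp (- (lam * measure lborel (cball_outside R x a)))"
proof -
  let ?V = "{\<omega>\<in>space M. Phi \<omega> \<inter> cball_outside R x a = {}}"
  have "?V \<in> events"
    using void_event_in_PPP_sigma[OF cball_outside_sets bounded_cball_outside] PPP_sigma_subset_events
    by blast
  then show ?thesis
    unfolding r1_le_event_eq[OF assms(2)]
    using no_points_outside_in_PPP_sigma_null_sets[OF assms(1)]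
    by (simp add: measure_Un_null_set prob_compl prob_void_event[OF cball_outside_sets bounded_cball_outside])
qed

lemma F_r1_eq: "0 \<le> R \<Longrightarrow> 0 \<le> a \<Longrightarrow>
    F_r1 M Phi R r a = 1 - exp (- (lam * measure lborel (cball_outside R (r, 0) a)))"
  unfolding F_r1_def by (rule prob_r1_le)

lemma prob_r1_le_eq_F_r1: "0 \<le> R \<Longrightarrow> 0 \<le> a \<Longrightarrow>
    prob {\<omega>\<in>space M. r1 R (Phi \<omega>) x \<le> a} = F_r1 M Phi R (norm x) a"
  by (simp add: prob_r1_le F_r1_eq measure_cball_outside_rotate[of R x])

lemma borel_measurable_F_r1:
  assumes [measurable]: "t \<in> borel_measurable borel" and "0 \<le> R" "\<And>r. 0 \<le> t r"
  shows "(\<lambda>r. F_r1 M Phi R r (t r)) \<in> borel_measurable borel"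
  using borel_measurable_measure_cball_outside[of t R] by (simp add: F_r1_eq assms)

end

lemma powr_le_iff_le_powr_inverse:
  fixes r T p :: real
  assumes "0 \<le> r" "0 \<le> T" "0 < p"
  shows "r powr p \<le> T \<longleftrightarrow> r \<le> T powr (1 / p)"
proof
  assume "r powr p \<le> T"
  then have "(r powr p) powr (1 / p) \<le> T powr (1 / p)" using assms by (intro powr_mono2) auto
  then show "r \<le> T powr (1 / p)" using assms by (simp add: powr_powr)
next
  assume "r \<le> T powr (1 / p)"
  then have "r powr p \<le> (T powr (1 / p)) powr p" using assms by (intro powr_mono2) auto
  then show "r powr p \<le> T" using assms by (simp add: powr_powr)
qed

lemma P_L_measurable [measurable]: "P_L B C H \<in> borel_measurable borel"
  unfolding P_L_def[abs_def] elev_def by measurable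

lemma P_N_measurable [measurable]: "P_N B C H \<in> borel_measurable borel"
  unfolding P_N_def[abs_def] by measurable

lemma A_thr_measurable [measurable]: "A_thr \<delta> H a aN \<in> borel_measurable borel"
  unfolding A_thr_def[abs_def] by measurable

lemma B_thr_measurable [measurable]: "B_thr \<delta> H a aN \<in> borel_measurable borel"
  unfolding B_thr_def[abs_def] by measurable

lemma A_thr_le_B_thr:
  assumes "0 < \<delta>" "\<delta> \<le> 1" "0 < aN"
  shows "A_thr \<delta> H a aN r \<le> B_thr \<delta> H a aN r"
  unfolding A_thr_def B_thr_def
proof (rule powr_mono2)
  have "\<delta> \<le> 1 / \<delta>" using assms by (simp add: field_simps) (metis mult_le_one less_imp_le)
  then show "\<delta> * (H\<^sup>2 + r\<^sup>2) powr (a / 2) \<le> 1 / \<delta> * (H\<^sup>2 + r\<^sup>2) powr (a / 2)"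
    by (intro mult_right_mono) auto
qed (use assms in auto)

locale labelled_poisson_point_process = poisson_point_process M lam Phi
  for M :: "'a measure" and lam Phi +
  fixes Rc :: real and s :: "'a \<Rightarrow> real \<times> real \<Rightarrow> bool" and B C H :: real
  assumes Rc_pos: "0 < Rc"
    and label: "\<forall>x. norm x \<le> Rc \<longrightarrow> {\<omega>\<in>space M. s \<omega> x} \<in> sets M \<and>
          measure M {\<omega>\<in>space M. s \<omega> x} = P_L B C H (norm x)"
    and label_indep: "\<forall>x. norm x \<le> Rc \<longrightarrow>
          indep_set (sigma_sets (space M) {{\<omega>\<in>space M. s \<omega> x}}) (PPP_sigma M Phi)"
begin

definition r1_le_label_event :: "real \<times> real \<Rightarrow> real \<Rightarrow> real \<Rightarrow> 'a set" where
  "r1_le_label_event x tL tN = {\<omega>\<in>space M. r1 Rc (Phi \<omega>) x \<le> (if s \<omega> x then tL else tN)}"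

lemma label_event_sets: "norm x \<le> Rc \<Longrightarrow> {\<omega>\<in>space M. s \<omega> x} \<in> events"
  using label by blast

lemma prob_label_event: "norm x \<le> Rc \<Longrightarrow> prob {\<omega>\<in>space M. s \<omega> x} = P_L B C H (norm x)"
  using label by blast

lemma P_L_bounds:
  assumes "r \<in> {0..Rc}" shows "0 \<le> P_L B C H r \<and> P_L B C H r \<le> 1"
proof -
  have "P_L B C H r = prob {\<omega>\<in>space M. s \<omega> (r, 0)}"
    using assms prob_label_event[of "(r, 0)"] by simp
  then show ?thesis by (metis measure_nonneg prob_le_1)
qed

lemma prob_label_Int_r1_le:
  assumes x: "norm x \<le> Rc" and "0 \<le> t" and S: "S \<in> sigma_sets (space M) {{\<omega>\<in>space M. s \<omega> x}}"
  shows "prob (S \<inter> {\<omega>\<in>space M. r1 Rc (Phi \<omega>) x \<le> t}) = prob S * F_r1 M Phi Rc (norm x) t"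
  using indep_setD[OF label_indep[rule_format, OF x] S r1_le_event_in_PPP_sigma] Rc_pos assms
  by (simp add: prob_r1_le_eq_F_r1)

lemma prob_r1_le_label_event:
  assumes x: "norm x \<le> Rc" and "0 \<le> tL" "0 \<le> tN"
  shows "prob (r1_le_label_event x tL tN)
    = P_L B C H (norm x) * F_r1 M Phi Rc (norm x) tL + P_N B C H (norm x) * F_r1 M Phi Rc (norm x) tN"
proof -
  let ?L = "{\<omega>\<in>space M. s \<omega> x}" and ?E = "\<lambda>t. {\<omega>\<in>space M. r1 Rc (Phi \<omega>) x \<le> t}"
  have L: "?L \<in> sigma_sets (space M) {?L}" "space M - ?L \<in> sigma_sets (space M) {?L}"
    by (auto intro: sigma_sets.Basic sigma_sets.Compl)
  have events: "?L \<in> events" "?E t \<in> events" if "0 \<le> t" for t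
    using label_event_sets[OF x] r1_le_event_sets Rc_pos that by auto
  have eq: "r1_le_label_event x tL tN = (?L \<inter> ?E tL) \<union> ((space M - ?L) \<inter> ?E tN)"
    unfolding r1_le_label_event_def by auto
  have "prob (r1_le_label_event x tL tN) = prob (?L \<inter> ?E tL) + prob ((space M - ?L) \<inter> ?E tN)"
    unfolding eq using events assms by (intro finite_measure_Union) (auto intro: sets.Int sets.Diff)
  also have "\<dots> = prob ?L * F_r1 M Phi Rc (norm x) tL + prob (space M - ?L) * F_r1 M Phi Rc (norm x) tN"
    using prob_label_Int_r1_le[OF x _ L(1)] prob_label_Int_r1_le[OF x _ L(2)] assms by simp
  finally show ?thesis
    using prob_label_event[OF x] events(1)[OF order_refl] by (simp add: prob_compl P_N_def)
qed

lemma r1_le_label_event_mono: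
  "tL \<le> tL' \<Longrightarrow> tN \<le> tN' \<Longrightarrow> r1_le_label_event x tL tN \<subseteq> r1_le_label_event x tL' tN'"
  unfolding r1_le_label_event_def by auto

lemma r1_le_label_event_sets:
  "norm x \<le> Rc \<Longrightarrow> 0 \<le> tL \<Longrightarrow> 0 \<le> tN \<Longrightarrow> r1_le_label_event x tL tN \<in> events"
proof -
  assume x: "norm x \<le> Rc" and t: "0 \<le> tL" "0 \<le> tN"
  have "r1_le_label_event x tL tN
      = ({\<omega>\<in>space M. s \<omega> x} \<inter> {\<omega>\<in>space M. r1 Rc (Phi \<omega>) x \<le> tL})
        \<union> ({\<omega>\<in>space M. \<not> s \<omega> x} \<inter> {\<omega>\<in>space M. r1 Rc (Phi \<omega>) x \<le> tN})"
    unfolding r1_le_label_event_def by auto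
  moreover have "{\<omega>\<in>space M. \<not> s \<omega> x} = space M - {\<omega>\<in>space M. s \<omega> x}" by auto
  ultimately show ?thesis
    using label_event_sets[OF x] r1_le_event_sets[of Rc] Rc_pos t
    by (auto intro!: sets.Un sets.Int sets.Diff)
qed

end

locale uav_coverage = labelled_poisson_point_process M lam Phi Rc s B C H
  for M :: "'a measure" and lam Phi Rc s B C H +
  fixes aL aN \<delta> :: real
  assumes H_pos: "0 < H" and aN_pos: "0 < aN" and \<delta>_pos: "0 < \<delta>" and \<delta>_le_1: "\<delta> \<le> 1"
begin

lemma r1_powr_le_label_iff:
  assumes "0 < c"
  shows "r1 Rc P x powr aN \<le> c * (H\<^sup>2 + (norm x)\<^sup>2) powr (alpha_of aL aN b / 2)
    \<longleftrightarrow> r1 Rc P x \<le> (if b then (c * (H\<^sup>2 + (norm x)\<^sup>2) powr (aL / 2)) powr (1 / aN)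
                         else (c * (H\<^sup>2 + (norm x)\<^sup>2) powr (aN / 2)) powr (1 / aN))"
  using assms aN_pos
  by (simp add: alpha_of_def powr_le_iff_le_powr_inverse r1_def infdist_nonneg)

lemma A_event_eq:
  "{\<omega>\<in>space M. r1 Rc (Phi \<omega>) x powr aN \<le> \<delta> * (H\<^sup>2 + (norm x)\<^sup>2) powr (alpha_of aL aN (s \<omega> x) / 2)}
    = r1_le_label_event x (A_thr \<delta> H aL aN (norm x)) (A_thr \<delta> H aN aN (norm x))"
  unfolding r1_le_label_event_def A_thr_def by (simp add: r1_powr_le_label_iff \<delta>_pos)

lemma B_event_eq:
  "{\<omega>\<in>space M. r1 Rc (Phi \<omega>) x powr aN \<le> (1 / \<delta>) * (H\<^sup>2 + (norm x)\<^sup>2) powr (alpha_of aL aN (s \<omega> x) / 2)}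
    = r1_le_label_event x (B_thr \<delta> H aL aN (norm x)) (B_thr \<delta> H aN aN (norm x))"
proof -
  have pos: "0 < 1 / \<delta>" using \<delta>_pos by simp
  show ?thesis unfolding r1_le_label_event_def B_thr_def r1_powr_le_label_iff[OF pos] by simp
qed

lemma A_thr_nonneg: "0 \<le> A_thr \<delta> H a aN r"
  unfolding A_thr_def by simp

lemma B_thr_nonneg: "0 \<le> B_thr \<delta> H a aN r"
  unfolding B_thr_def by simp

lemma A_event_sets: "norm x \<le> Rc \<Longrightarrow> r1_le_label_event x (A_thr \<delta> H aL aN (norm x)) (A_thr \<delta> H aN aN (norm x)) \<in> events"
  by (simp add: r1_le_label_event_sets A_thr_nonneg)

lemma B_event_sets: "norm x \<le> Rc \<Longrightarrow> r1_le_label_event x (B_thr \<delta> H aL aN (norm x)) (B_thr \<delta> H aN aN (norm x)) \<in> events"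
  by (simp add: r1_le_label_event_sets B_thr_nonneg)

lemma prob_A1:
  "norm x \<le> Rc \<Longrightarrow>
   prob {\<omega>\<in>space M. r1 Rc (Phi \<omega>) x powr aN \<le> \<delta> * (H\<^sup>2 + (norm x)\<^sup>2) powr (alpha_of aL aN (s \<omega> x) / 2)}
    = P_L B C H (norm x) * F_r1 M Phi Rc (norm x) (A_thr \<delta> H aL aN (norm x))
    + P_N B C H (norm x) * F_r1 M Phi Rc (norm x) (A_thr \<delta> H aN aN (norm x))"
  unfolding A_event_eq by (simp add: prob_r1_le_label_event A_thr_nonneg)

lemma prob_A2:
  assumes "norm x \<le> Rc"
  shows "prob {\<omega>\<in>space M. \<delta> * (H\<^sup>2 + (norm x)\<^sup>2) powr (alpha_of aL aN (s \<omega> x) / 2) < r1 Rc (Phi \<omega>) x powr aN \<and>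
        r1 Rc (Phi \<omega>) x powr aN \<le> (1 / \<delta>) * (H\<^sup>2 + (norm x)\<^sup>2) powr (alpha_of aL aN (s \<omega> x) / 2)}
    = P_L B C H (norm x) * (F_r1 M Phi Rc (norm x) (B_thr \<delta> H aL aN (norm x)) - F_r1 M Phi Rc (norm x) (A_thr \<delta> H aL aN (norm x)))
    + P_N B C H (norm x) * (F_r1 M Phi Rc (norm x) (B_thr \<delta> H aN aN (norm x)) - F_r1 M Phi Rc (norm x) (A_thr \<delta> H aN aN (norm x)))"
proof -
  have "{\<omega>\<in>space M. \<delta> * (H\<^sup>2 + (norm x)\<^sup>2) powr (alpha_of aL aN (s \<omega> x) / 2) < r1 Rc (Phi \<omega>) x powr aN \<and>
        r1 Rc (Phi \<omega>) x powr aN \<le> (1 / \<delta>) * (H\<^sup>2 + (norm x)\<^sup>2) powr (alpha_of aL aN (s \<omega> x) / 2)}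
    = r1_le_label_event x (B_thr \<delta> H aL aN (norm x)) (B_thr \<delta> H aN aN (norm x))
      - r1_le_label_event x (A_thr \<delta> H aL aN (norm x)) (A_thr \<delta> H aN aN (norm x))"
    unfolding A_event_eq[symmetric] B_event_eq[symmetric] by (auto simp: not_le)
  moreover have "r1_le_label_event x (A_thr \<delta> H aL aN (norm x)) (A_thr \<delta> H aN aN (norm x))
      \<subseteq> r1_le_label_event x (B_thr \<delta> H aL aN (norm x)) (B_thr \<delta> H aN aN (norm x))"
    using \<delta>_pos \<delta>_le_1 aN_pos by (intro r1_le_label_event_mono A_thr_le_B_thr)
  ultimately show ?thesis
    using assms A_event_sets B_event_sets
    by (simp add: finite_measure_Diff prob_r1_le_label_event A_thr_nonneg B_thr_nonneg algebra_simps)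
qed

lemma prob_A3:
  assumes "norm x \<le> Rc"
  shows "prob {\<omega>\<in>space M. r1 Rc (Phi \<omega>) x powr aN > (1 / \<delta>) * (H\<^sup>2 + (norm x)\<^sup>2) powr (alpha_of aL aN (s \<omega> x) / 2)}
    = P_L B C H (norm x) * (1 - F_r1 M Phi Rc (norm x) (B_thr \<delta> H aL aN (norm x)))
    + P_N B C H (norm x) * (1 - F_r1 M Phi Rc (norm x) (B_thr \<delta> H aN aN (norm x)))"
proof -
  have "{\<omega>\<in>space M. r1 Rc (Phi \<omega>) x powr aN > (1 / \<delta>) * (H\<^sup>2 + (norm x)\<^sup>2) powr (alpha_of aL aN (s \<omega> x) / 2)}
    = space M - r1_le_label_event x (B_thr \<delta> H aL aN (norm x)) (B_thr \<delta> H aN aN (norm x))"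
    unfolding B_event_eq[symmetric] by (auto simp: not_le)
  then show ?thesis
    using assms B_event_sets
    by (simp add: prob_compl prob_r1_le_label_event B_thr_nonneg P_N_def algebra_simps)
qed

lemma F_r1_bounds: "0 \<le> F_r1 M Phi Rc r t" "F_r1 M Phi Rc r t \<le> 1"
  unfolding F_r1_def by (rule measure_nonneg, rule prob_le_1)

lemma abs_F_r1_le_1: "\<bar>F_r1 M Phi Rc r t\<bar> \<le> 1"
  using F_r1_bounds[of r t] by linarith

lemma abs_F_r1_diff_le_1: "\<bar>F_r1 M Phi Rc r t - F_r1 M Phi Rc r t'\<bar> \<le> 1"
  using F_r1_bounds[of r t] F_r1_bounds[of r t'] by linarith

lemma abs_one_minus_F_r1_le_1: "\<bar>1 - F_r1 M Phi Rc r t\<bar> \<le> 1"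
  using F_r1_bounds[of r t] by linarith

lemma abs_P_L_mult_le_1: "r \<in> {0..Rc} \<Longrightarrow> \<bar>u\<bar> \<le> 1 \<Longrightarrow> \<bar>P_L B C H r * u\<bar> \<le> 1"
  using P_L_bounds[of r] by (simp add: abs_mult mult_le_one)

lemma abs_P_N_mult_le_1: "r \<in> {0..Rc} \<Longrightarrow> \<bar>u\<bar> \<le> 1 \<Longrightarrow> \<bar>P_N B C H r * u\<bar> \<le> 1"
  using P_L_bounds[of r] by (simp add: abs_mult mult_le_one P_N_def)

lemma F_r1_thr_measurable [measurable]:
  "(\<lambda>r. F_r1 M Phi Rc r (A_thr \<delta> H a aN r)) \<in> borel_measurable borel"
  "(\<lambda>r. F_r1 M Phi Rc r (B_thr \<delta> H a aN r)) \<in> borel_measurable borel"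
  using Rc_pos
  by (intro borel_measurable_F_r1 A_thr_measurable B_thr_measurable A_thr_nonneg B_thr_nonneg; simp)+

lemma expected_area_A1:
  "(LINT x:{x. norm x \<le> Rc}|lborel. measure M {\<omega>\<in>space M.
      r1 Rc (Phi \<omega>) x powr aN \<le> \<delta> * (H\<^sup>2 + (norm x)\<^sup>2) powr (alpha_of aL aN (s \<omega> x) / 2)})
    = 2 * pi * ((LINT r0:{0..Rc}|lborel. P_L B C H r0 * F_r1 M Phi Rc r0 (A_thr \<delta> H aL aN r0) * r0)
              + (LINT r0:{0..Rc}|lborel. P_N B C H r0 * F_r1 M Phi Rc r0 (A_thr \<delta> H aN aN r0) * r0))"
  by (rule integral_disc_radial_mixture[where K=1 and p="P_L B C H" and q="P_N B C H"
        and u="\<lambda>r. F_r1 M Phi Rc r (A_thr \<delta> H aL aN r)" and v="\<lambda>r. F_r1 M Phi Rc r (A_thr \<delta> H aN aN r)"])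
     (erule prob_A1, measurable, auto intro!: abs_P_L_mult_le_1 abs_P_N_mult_le_1 abs_F_r1_le_1)

lemma expected_area_A2:
  "(LINT x:{x. norm x \<le> Rc}|lborel. measure M {\<omega>\<in>space M.
      \<delta> * (H\<^sup>2 + (norm x)\<^sup>2) powr (alpha_of aL aN (s \<omega> x) / 2) < r1 Rc (Phi \<omega>) x powr aN \<and>
      r1 Rc (Phi \<omega>) x powr aN \<le> (1 / \<delta>) * (H\<^sup>2 + (norm x)\<^sup>2) powr (alpha_of aL aN (s \<omega> x) / 2)})
    = 2 * pi * ((LINT r0:{0..Rc}|lborel. P_L B C H r0 *
                   (F_r1 M Phi Rc r0 (B_thr \<delta> H aL aN r0) - F_r1 M Phi Rc r0 (A_thr \<delta> H aL aN r0)) * r0)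
              + (LINT r0:{0..Rc}|lborel. P_N B C H r0 *
                   (F_r1 M Phi Rc r0 (B_thr \<delta> H aN aN r0) - F_r1 M Phi Rc r0 (A_thr \<delta> H aN aN r0)) * r0))"
  by (rule integral_disc_radial_mixture[where K=1 and p="P_L B C H" and q="P_N B C H"
        and u="\<lambda>r. F_r1 M Phi Rc r (B_thr \<delta> H aL aN r) - F_r1 M Phi Rc r (A_thr \<delta> H aL aN r)"
        and v="\<lambda>r. F_r1 M Phi Rc r (B_thr \<delta> H aN aN r) - F_r1 M Phi Rc r (A_thr \<delta> H aN aN r)"])
     (erule prob_A2, measurable, auto intro!: abs_P_L_mult_le_1 abs_P_N_mult_le_1 abs_F_r1_diff_le_1)

lemma expected_area_A3:
  "(LINT x:{x. norm x \<le> Rc}|lborel. measure M {\<omega>\<in>space M.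
      r1 Rc (Phi \<omega>) x powr aN > (1 / \<delta>) * (H\<^sup>2 + (norm x)\<^sup>2) powr (alpha_of aL aN (s \<omega> x) / 2)})
    = 2 * pi * ((LINT r0:{0..Rc}|lborel. P_L B C H r0 * (1 - F_r1 M Phi Rc r0 (B_thr \<delta> H aL aN r0)) * r0)
              + (LINT r0:{0..Rc}|lborel. P_N B C H r0 * (1 - F_r1 M Phi Rc r0 (B_thr \<delta> H aN aN r0)) * r0))"
  by (rule integral_disc_radial_mixture[where K=1 and p="P_L B C H" and q="P_N B C H"
        and u="\<lambda>r. 1 - F_r1 M Phi Rc r (B_thr \<delta> H aL aN r)" and v="\<lambda>r. 1 - F_r1 M Phi Rc r (B_thr \<delta> H aN aN r)"])
     (erule prob_A3, measurable, auto intro!: abs_P_L_mult_le_1 abs_P_N_mult_le_1 abs_one_minus_F_r1_le_1)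

end

theorem proposition1:
  fixes M :: "'a measure" and Phi :: "'a \<Rightarrow> (real \<times> real) set"
    and s :: "'a \<Rightarrow> real \<times> real \<Rightarrow> bool"
    and lam Rc H aL aN B C \<delta> :: real
  assumes "prob_space M"
    and "lam > 0" "Rc > 0" "H > 0" "aL > 0" "aN > 0" "B > 0" "C > 0"
    and "0 < \<delta>" "\<delta> \<le> 1"
    and "is_PPP M lam Phi"
    and "\<forall>x. norm x \<le> Rc \<longrightarrow> {\<omega>\<in>space M. s \<omega> x} \<in> sets M \<and>
            measure M {\<omega>\<in>space M. s \<omega> x} = P_L B C H (norm x)"
    and "\<forall>x. norm x \<le> Rc \<longrightarrow>
            prob_space.indep_set M (sigma_sets (space M) {{\<omega>\<in>space M. s \<omega> x}}) (PPP_sigma M Phi)"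
  shows
   "(LINT x:{x. norm x \<le> Rc}|lborel. measure M {\<omega>\<in>space M.
        r1 Rc (Phi \<omega>) x powr aN \<le> \<delta> * (H\<^sup>2 + (norm x)\<^sup>2) powr (alpha_of aL aN (s \<omega> x) / 2)})
      = 2 * pi * ((LINT r0:{0..Rc}|lborel. P_L B C H r0 * F_r1 M Phi Rc r0 (A_thr \<delta> H aL aN r0) * r0)
                + (LINT r0:{0..Rc}|lborel. P_N B C H r0 * F_r1 M Phi Rc r0 (A_thr \<delta> H aN aN r0) * r0)) \<and>
   (LINT x:{x. norm x \<le> Rc}|lborel. measure M {\<omega>\<in>space M.
        \<delta> * (H\<^sup>2 + (norm x)\<^sup>2) powr (alpha_of aL aN (s \<omega> x) / 2) < r1 Rc (Phi \<omega>) x powr aN \<and>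
        r1 Rc (Phi \<omega>) x powr aN \<le> (1 / \<delta>) * (H\<^sup>2 + (norm x)\<^sup>2) powr (alpha_of aL aN (s \<omega> x) / 2)})
      = 2 * pi * ((LINT r0:{0..Rc}|lborel. P_L B C H r0 *
                     (F_r1 M Phi Rc r0 (B_thr \<delta> H aL aN r0) - F_r1 M Phi Rc r0 (A_thr \<delta> H aL aN r0)) * r0)
                + (LINT r0:{0..Rc}|lborel. P_N B C H r0 *
                     (F_r1 M Phi Rc r0 (B_thr \<delta> H aN aN r0) - F_r1 M Phi Rc r0 (A_thr \<delta> H aN aN r0)) * r0)) \<and>
   (LINT x:{x. norm x \<le> Rc}|lborel. measure M {\<omega>\<in>space M.
        r1 Rc (Phi \<omega>) x powr aN > (1 / \<delta>) * (H\<^sup>2 + (norm x)\<^sup>2) powr (alpha_of aL aN (s \<omega> x) / 2)})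
      = 2 * pi * ((LINT r0:{0..Rc}|lborel. P_L B C H r0 * (1 - F_r1 M Phi Rc r0 (B_thr \<delta> H aL aN r0)) * r0)
                + (LINT r0:{0..Rc}|lborel. P_N B C H r0 * (1 - F_r1 M Phi Rc r0 (B_thr \<delta> H aN aN r0)) * r0))"
proof -
  interpret uav_coverage M lam Phi Rc s B C H aL aN \<delta>
    by (intro uav_coverage.intro labelled_poisson_point_process.intro poisson_point_process.intro
          poisson_point_process_axioms.intro labelled_poisson_point_process_axioms.intro
          uav_coverage_axioms.intro) (rule assms)+
  show ?thesis using expected_area_A1 expected_area_A2 expected_area_A3 by (intro conjI)
qed

end
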